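(* Let $m,n$ be positive coprime integers with $1\le m/n\le 2$ and $3\nmid(m+n)$, let $\theta\in[\pi/3,\pi/2]$ satisfy $\cos\theta = \frac{|n^2+2mn-2m^2|}{2(m^2-mn+n^2)}$, and let $$\Gamma_\theta = \frac12\begin{bmatrix} m+n & m-2n\\ (m-n)\sqrt3 & m\sqrt3\end{bmatrix}\mathbb{Z}^2.$$ Then for every $\Omega\in C_h(\theta)$, $|\Gamma_\theta|\le|\Omega|$.
   Context: $\Lambda_h = \begin{bmatrix} 1 & -1/2 \\ 0 & \sqrt3/2\end{bmatrix}\mathbb{Z}^2$. For a full-rank lattice $\Gamma\subset\mathbb{R}^2$, $|\Gamma|=\min\{\|y\|^2:y\in\Gamma\setminus\{0\}\}$. $\Gamma$ is well-rounded (WR) if it has a basis of vectors of squared norm $|\Gamma|$; such a basis can be chosen with angle in $[\pi/3,\pi/2]$ between its vectors, and this angle $\theta(\Gamma)$ is an invariant. $\mathrm{WR}(\Lambda_h)$ is the set of full-rank WR sublattices of $\Lambda_h$, and $C_h(\theta)=\{\Omega\in\mathrm{WR}(\Lambda_h):\theta(\Omega)=\theta\}$. *)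

theory Defs
  imports "HOL-Analysis.Analysis"
begin

definition lattice_span :: "real^2 \<Rightarrow> real^2 \<Rightarrow> (real^2) set" where
  "lattice_span a b = {of_int i *\<^sub>R a + of_int j *\<^sub>R b | i j. True}"

definition indep2 :: "real^2 \<Rightarrow> real^2 \<Rightarrow> bool" where
  "indep2 a b \<longleftrightarrow> a$1 * b$2 - a$2 * b$1 \<noteq> 0"

definition is_basis2 :: "(real^2) set \<Rightarrow> real^2 \<Rightarrow> real^2 \<Rightarrow> bool" where
  "is_basis2 L a b \<longleftrightarrow> indep2 a b \<and> L = lattice_span a b"

definition full_rank_lattice :: "(real^2) set \<Rightarrow> bool" where
  "full_rank_lattice L \<longleftrightarrow> (\<exists>a b. is_basis2 L a b)"

definition lattice_min :: "(real^2) set \<Rightarrow> real" where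
  "lattice_min L = Inf {norm y ^ 2 | y. y \<in> L - {0}}"

definition vec_angle :: "real^2 \<Rightarrow> real^2 \<Rightarrow> real" where
  "vec_angle a b = arccos (inner a b / (norm a * norm b))"

definition wr_basis :: "(real^2) set \<Rightarrow> real^2 \<Rightarrow> real^2 \<Rightarrow> bool" where
  "wr_basis L a b \<longleftrightarrow> is_basis2 L a b \<and> norm a ^ 2 = lattice_min L \<and>
     norm b ^ 2 = lattice_min L"

definition well_rounded :: "(real^2) set \<Rightarrow> bool" where
  "well_rounded L \<longleftrightarrow> full_rank_lattice L \<and> (\<exists>a b. wr_basis L a b)"

definition wr_angle :: "(real^2) set \<Rightarrow> real" where
  "wr_angle L = (THE t. \<exists>a b. wr_basis L a b \<and> vec_angle a b = t \<and>
       pi / 3 \<le> t \<and> t \<le> pi / 2)"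

definition Lambda_h :: "(real^2) set" where
  "Lambda_h = lattice_span (vector [1, 0]) (vector [-1/2, sqrt 3 / 2])"

definition C_h :: "real \<Rightarrow> (real^2) set set" where
  "C_h t = {\<Omega>. \<Omega> \<subseteq> Lambda_h \<and> full_rank_lattice \<Omega> \<and> well_rounded \<Omega> \<and> wr_angle \<Omega> = t}"

definition Gamma_theta :: "int \<Rightarrow> int \<Rightarrow> (real^2) set" where
  "Gamma_theta m n = lattice_span
     (vector [(of_int m + of_int n) / 2, (of_int m - of_int n) * sqrt 3 / 2])
     (vector [(of_int m - 2 * of_int n) / 2, of_int m * sqrt 3 / 2])"

end

theory Submission
  imports Defs "HOL-Computational_Algebra.Primes"
begin

text \<open>Let \<open>a, b\<close> be a minimal basis of \<open>\<Omega> \<in> C_h(\<theta>)\<close>, so that \<open>cos \<theta> = \<langle>a,b\<rangle> / |\<Omega>|\<close>.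
  Since \<open>\<Lambda>_h\<close> has an integral norm form, \<open>|\<Omega>| = Q\<close> and \<open>2\<langle>a,b\<rangle> = p\<close> are integers, and the
  hypothesis on \<open>cos \<theta>\<close> becomes \<open>p N = |D| Q\<close> with \<open>N = m\<^sup>2 - mn + n\<^sup>2\<close> and
  \<open>D = n\<^sup>2 + 2mn - 2m\<^sup>2\<close>.  A common prime factor of \<open>D\<close> and \<open>N\<close> divides \<open>D - N = 3m(n - m)\<close>, and
  each of the three possibilities contradicts \<open>gcd(m,n) = 1\<close> or \<open>3 \<nmid> m + n\<close>; hence \<open>N\<close> divides
  \<open>Q\<close> and \<open>|\<Omega>| \<ge> N\<close>.  Finally \<open>N\<close> is the squared norm of the first generator of \<open>\<Gamma>_\<theta>\<close>.

  The angle \<open>\<theta>(\<Omega>)\<close> is defined by a description, so one also has to show that it is well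
  defined: two minimal bases have the same \<open>|det|\<close>, and by Lagrange's identity
  \<open>\<langle>a,b\<rangle>\<^sup>2 + det(a,b)\<^sup>2 = |\<Omega>|\<^sup>2\<close> they have the same \<open>|cos|\<close>.\<close>

lemma inner_real2: "inner (x::real^2) y = x$1 * y$1 + x$2 * y$2"
  by (simp add: inner_vec_def sum_2)

lemma norm_sq_real2: "norm (x::real^2) ^ 2 = x$1 ^ 2 + x$2 ^ 2"
  unfolding power2_norm_eq_inner inner_real2 by (simp add: power2_eq_square)

definition det2 :: "real^2 \<Rightarrow> real^2 \<Rightarrow> real" where
  "det2 a b = a$1 * b$2 - a$2 * b$1"

lemma indep2_iff_det2: "indep2 a b \<longleftrightarrow> det2 a b \<noteq> 0"
  by (simp add: indep2_def det2_def)

lemma inner_sq_plus_det2_sq: "inner a b ^ 2 + det2 a b ^ 2 = norm a ^ 2 * norm b ^ 2"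
  unfolding norm_sq_real2 by (simp add: inner_real2 det2_def power2_eq_square algebra_simps)

lemma det2_int_combination:
  "det2 (of_int i *\<^sub>R a + of_int j *\<^sub>R b) (of_int k *\<^sub>R a + of_int l *\<^sub>R b)
     = of_int (i * l - j * k) * det2 a b"
  by (simp add: det2_def algebra_simps)

lemma lattice_span_left: "a \<in> lattice_span a b"
  unfolding lattice_span_def by (rule CollectI, rule exI[of _ 1], rule exI[of _ 0]) simp

lemma lattice_span_right: "b \<in> lattice_span a b"
  unfolding lattice_span_def by (rule CollectI, rule exI[of _ 0], rule exI[of _ 1]) simp

lemma lattice_spanE:
  assumes "c \<in> lattice_span a b"
  obtains i j :: int where "c = of_int i *\<^sub>R a + of_int j *\<^sub>R b"
  using assms unfolding lattice_span_def by auto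

lemma lattice_span_subset_uminus_right: "lattice_span a b \<subseteq> lattice_span a (- b)"
proof
  fix x assume "x \<in> lattice_span a b"
  then obtain i j :: int where "x = of_int i *\<^sub>R a + of_int j *\<^sub>R b"
    by (rule lattice_spanE)
  then have "x = of_int i *\<^sub>R a + of_int (- j) *\<^sub>R (- b)" by simp
  then show "x \<in> lattice_span a (- b)"
    unfolding lattice_span_def by blast
qed

lemma lattice_span_uminus_right: "lattice_span a (- b) = lattice_span a b"
  using lattice_span_subset_uminus_right[of a b] lattice_span_subset_uminus_right[of a "- b"]
  by simp

lemma det2_dvd_lattice_span:
  assumes "c \<in> lattice_span a b" "d \<in> lattice_span a b"
  obtains k :: int where "det2 c d = of_int k * det2 a b"
proof -
  obtain i j :: int where "c = of_int i *\<^sub>R a + of_int j *\<^sub>R b"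
    using assms(1) by (rule lattice_spanE)
  moreover obtain k l :: int where "d = of_int k *\<^sub>R a + of_int l *\<^sub>R b"
    using assms(2) by (rule lattice_spanE)
  ultimately have "det2 c d = of_int (i * l - j * k) * det2 a b"
    by (simp only: det2_int_combination)
  then show ?thesis by (rule that)
qed

lemma abs_det2_lattice_span_eq:
  assumes "indep2 a b" "lattice_span a b = lattice_span c d"
  shows "\<bar>det2 a b\<bar> = \<bar>det2 c d\<bar>"
proof -
  obtain k where k: "det2 c d = of_int k * det2 a b"
    using det2_dvd_lattice_span lattice_span_left lattice_span_right assms(2) by metis
  obtain k' where k': "det2 a b = of_int k' * det2 c d"
    using det2_dvd_lattice_span lattice_span_left lattice_span_right assms(2) by metis
  have "det2 a b \<noteq> 0" using assms(1) by (simp add: indep2_iff_det2)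
  with k k' have "real_of_int k' * of_int k = 1" by (simp add: algebra_simps)
  then have "k' * k = 1" by (metis of_int_eq_1_iff of_int_mult)
  then have "\<bar>k\<bar> = 1" by (metis abs_zmult_eq_1 mult.commute abs_1)
  then show ?thesis using k by (simp add: abs_mult flip: of_int_abs)
qed

lemma lattice_min_le_norm_sq:
  assumes "y \<in> L" "y \<noteq> 0"
  shows "lattice_min L \<le> norm y ^ 2"
  unfolding lattice_min_def
  by (rule cInf_lower) (use assms in \<open>auto intro: bdd_belowI[of _ 0]\<close>)

lemma wr_basis_lattice_min_pos:
  assumes "wr_basis W a b"
  shows "lattice_min W > 0"
proof -
  have "a \<noteq> 0" using assms by (auto simp: wr_basis_def is_basis2_def indep2_def)
  then show ?thesis using assms by (metis wr_basis_def zero_less_norm_iff zero_less_power)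
qed

lemma wr_basis_norm_mult:
  assumes "wr_basis W a b"
  shows "norm a * norm b = lattice_min W"
proof -
  have "norm a ^ 2 = lattice_min W" "norm b ^ 2 = lattice_min W"
    using assms by (auto simp: wr_basis_def)
  moreover from this have "norm a = norm b" by (metis norm_ge_zero power2_eq_imp_eq)
  ultimately show ?thesis by (simp add: power2_eq_square)
qed

lemma wr_basis_cos_vec_angle:
  assumes "wr_basis W a b"
  shows "cos (vec_angle a b) = inner a b / lattice_min W"
proof -
  have "\<bar>inner a b\<bar> \<le> lattice_min W"
    using Cauchy_Schwarz_ineq2[of a b] wr_basis_norm_mult[OF assms] by simp
  with wr_basis_lattice_min_pos[OF assms]
  have "-1 \<le> inner a b / lattice_min W" "inner a b / lattice_min W \<le> 1"
    by (simp_all add: abs_le_iff divide_simps)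
  then show ?thesis
    by (simp add: vec_angle_def wr_basis_norm_mult[OF assms] cos_arccos)
qed

lemma wr_basis_vec_angle_unique:
  assumes "wr_basis W a b" "wr_basis W c d"
    and "pi / 3 \<le> vec_angle a b" "vec_angle a b \<le> pi / 2"
    and "pi / 3 \<le> vec_angle c d" "vec_angle c d \<le> pi / 2"
  shows "vec_angle a b = vec_angle c d"
proof -
  define L where "L = lattice_min W"
  have "indep2 a b" "lattice_span a b = lattice_span c d"
    using assms(1,2) by (simp_all add: wr_basis_def is_basis2_def)
  then have "\<bar>det2 a b\<bar> ^ 2 = \<bar>det2 c d\<bar> ^ 2"
    by (simp only: abs_det2_lattice_span_eq)
  then have "det2 a b ^ 2 = det2 c d ^ 2"
    by (simp only: power2_abs)
  moreover have "inner a b ^ 2 + det2 a b ^ 2 = L ^ 2" "inner c d ^ 2 + det2 c d ^ 2 = L ^ 2"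
    using assms(1,2) inner_sq_plus_det2_sq
    by (auto simp: L_def wr_basis_def power2_eq_square)
  ultimately have "cos (vec_angle a b) ^ 2 = cos (vec_angle c d) ^ 2"
    using assms(1,2) by (simp add: wr_basis_cos_vec_angle L_def power_divide)
  moreover have "0 \<le> cos (vec_angle a b)" "0 \<le> cos (vec_angle c d)"
    using assms(3-6) by (auto intro!: cos_ge_zero)
  ultimately have "cos (vec_angle a b) = cos (vec_angle c d)"
    by (rule power2_eq_imp_eq)
  then show ?thesis
    by (rule cos_inj_pi[rotated 4]) (use assms(3-6) pi_gt_zero in linarith)+
qed

text \<open>Replacing \<open>b\<close> by \<open>-b\<close> makes \<open>\<langle>a,b\<rangle> \<ge> 0\<close>; minimality against \<open>a - b\<close> then gives
  \<open>2\<langle>a,b\<rangle> \<le> |W|\<close>, i.e. an angle in \<open>[\<pi>/3, \<pi>/2]\<close>.\<close>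

lemma wr_basis_obtain_angle:
  assumes "wr_basis W a b"
  obtains b' where "wr_basis W a b'" "pi / 3 \<le> vec_angle a b'" "vec_angle a b' \<le> pi / 2"
proof -
  define b' where "b' = (if inner a b \<ge> 0 then b else - b)"
  have wr: "wr_basis W a b'"
    using assms lattice_span_uminus_right[of a b]
    by (auto simp: b'_def wr_basis_def is_basis2_def indep2_def)
  define L where "L = lattice_min W"
  have "a - b' = of_int 1 *\<^sub>R a + of_int (-1) *\<^sub>R b'" by simp
  then have "a - b' \<in> W"
    using wr unfolding wr_basis_def is_basis2_def lattice_span_def by blast
  moreover have "a - b' \<noteq> 0"
    using wr by (auto simp: wr_basis_def is_basis2_def indep2_def)
  ultimately have "L \<le> norm (a - b') ^ 2"
    using lattice_min_le_norm_sq L_def by simp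
  also have "norm (a - b') ^ 2 = norm a ^ 2 - 2 * inner a b' + norm b' ^ 2"
    by (simp add: power2_norm_eq_inner inner_diff inner_commute algebra_simps)
  finally have "2 * inner a b' \<le> L"
    using wr by (simp add: L_def wr_basis_def)
  moreover have "0 \<le> inner a b'" by (simp add: b'_def)
  moreover have "L > 0" using wr_basis_lattice_min_pos[OF wr] L_def by simp
  ultimately have x: "0 \<le> inner a b' / L" "inner a b' / L \<le> 1 / 2"
    by (simp_all add: field_simps)
  have angle: "vec_angle a b' = arccos (inner a b' / L)"
    by (simp add: vec_angle_def wr_basis_norm_mult[OF wr] L_def)
  have "arccos (1 / 2) \<le> arccos (inner a b' / L)" "arccos (inner a b' / L) \<le> arccos 0"
    by (rule arccos_le_arccos; use x in linarith)+
  then have "pi / 3 \<le> vec_angle a b'" "vec_angle a b' \<le> pi / 2"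
    unfolding angle arccos_0 arccos_one_half .
  with wr that show ?thesis by blast
qed

lemma wr_angle_attained:
  assumes "well_rounded W"
  obtains a b where "wr_basis W a b" "vec_angle a b = wr_angle W"
proof -
  let ?P = "\<lambda>t. \<exists>a b. wr_basis W a b \<and> vec_angle a b = t \<and> pi / 3 \<le> t \<and> t \<le> pi / 2"
  obtain a b where "wr_basis W a b" "pi / 3 \<le> vec_angle a b" "vec_angle a b \<le> pi / 2"
    using assms wr_basis_obtain_angle unfolding well_rounded_def by metis
  then have "\<exists>!t. ?P t"
    using wr_basis_vec_angle_unique by (intro ex1I[of _ "vec_angle a b"]) blast+
  then have "?P (wr_angle W)"
    unfolding wr_angle_def by (rule theI')
  with that show ?thesis by blast
qed

lemma Lambda_hE:
  assumes "y \<in> Lambda_h"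
  obtains i j :: int where "y$1 = of_int i - of_int j / 2" "y$2 = of_int j * sqrt 3 / 2"
  using assms unfolding Lambda_h_def lattice_span_def by auto

lemma sqrt3_mult_self_left: "sqrt 3 * (sqrt 3 * x) = 3 * x"
  by (simp flip: mult.assoc)

lemma Lambda_h_norm_sq_Ints: "a \<in> Lambda_h \<Longrightarrow> norm a ^ 2 \<in> \<int>"
proof (elim Lambda_hE)
  fix i j :: int
  assume a1: "a$1 = of_int i - of_int j / 2" and a2: "a$2 = of_int j * sqrt 3 / 2"
  have "norm a ^ 2 = of_int (i^2 - i * j + j^2)"
    unfolding norm_sq_real2 a1 a2 by (simp add: power2_eq_square algebra_simps sqrt3_mult_self_left)
  then show "norm a ^ 2 \<in> \<int>" by simp
qed

lemma Lambda_h_double_inner_Ints: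
  assumes "a \<in> Lambda_h" "b \<in> Lambda_h"
  shows "2 * inner a b \<in> \<int>"
proof -
  obtain i j k l :: int where
    a1: "a$1 = of_int i - of_int j / 2" and a2: "a$2 = of_int j * sqrt 3 / 2" and
    b1: "b$1 = of_int k - of_int l / 2" and b2: "b$2 = of_int l * sqrt 3 / 2"
    using assms by (metis Lambda_hE)
  have "2 * inner a b = of_int (2 * i * k - i * l - j * k + 2 * j * l)"
    unfolding inner_real2 a1 a2 b1 b2 by (simp add: algebra_simps sqrt3_mult_self_left)
  then show ?thesis by simp
qed

lemma coprime_int_if_no_common_prime_divisor:
  fixes a b :: int
  assumes "\<And>q. prime q \<Longrightarrow> q dvd a \<Longrightarrow> q dvd b \<Longrightarrow> False"
  shows "coprime a b"
proof (rule coprimeI)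
  fix c assume c: "c dvd a" "c dvd b"
  show "is_unit c"
  proof (cases "c = 0")
    case True
    then show ?thesis using c assms[of 2] by simp
  next
    case False
    then show ?thesis
      using c assms prime_divisor_exists dvd_trans by metis
  qed
qed

lemma coprime_cos_numerator_denominator:
  fixes m n :: int
  assumes "coprime m n" "\<not> 3 dvd (m + n)"
  shows "coprime (n^2 + 2*m*n - 2*m^2) (m^2 - m*n + n^2)"
proof (rule coprime_int_if_no_common_prime_divisor)
  fix q :: int
  assume q: "prime q" "q dvd n^2 + 2*m*n - 2*m^2" "q dvd m^2 - m*n + n^2"
  have coprime_q: "\<not> q dvd m \<or> \<not> q dvd n"
    using assms(1) q(1) by (metis coprime_common_divisor not_prime_unit)
  have "q dvd (n^2 + 2*m*n - 2*m^2) - (m^2 - m*n + n^2)"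
    using q(2,3) by (rule dvd_diff)
  also have "(n^2 + 2*m*n - 2*m^2) - (m^2 - m*n + n^2) = 3 * (m * (n - m))"
    by (simp add: algebra_simps power2_eq_square)
  finally consider "q dvd 3" | "q dvd m" | "q dvd n - m"
    using q(1) prime_dvd_mult_iff by metis
  then show False
  proof cases
    case 1
    have "q = 3" by (rule primes_dvd_imp_eq[OF q(1) _ 1]) simp
    have "(m^2 - m*n + n^2) + 3 * (m * n) = (m + n)^2"
      by (simp add: algebra_simps power2_eq_square)
    then have "q dvd (m + n)^2"
      using q(3) \<open>q = 3\<close> by (metis dvd_add dvd_triv_left)
    then show False
      using assms(2) q(1) \<open>q = 3\<close> prime_dvd_power by metis
  next
    case 2
    have "(m^2 - m*n + n^2) - m * (m - n) = n^2"
      by (simp add: algebra_simps power2_eq_square)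
    then have "q dvd n^2" using q(3) 2 by (metis dvd_diff dvd_mult2)
    then show False using coprime_q 2 q(1) prime_dvd_power by metis
  next
    case 3
    have "(m^2 - m*n + n^2) - n * (n - m) = m^2"
      by (simp add: algebra_simps power2_eq_square)
    then have "q dvd m^2" using q(3) 3 by (metis dvd_diff dvd_mult)
    then have "q dvd m" using q(1) prime_dvd_power by metis
    moreover from this have "q dvd n" using 3 by (metis dvd_add diff_add_cancel)
    ultimately show False using coprime_q by blast
  qed
qed

lemma hex_norm_form_pos:
  fixes m n :: int
  assumes "m \<noteq> 0 \<or> n \<noteq> 0"
  shows "m^2 - m*n + n^2 > 0"
proof -
  have "2 * (m^2 - m*n + n^2) = (m - n)^2 + (m^2 + n^2)"
    by (simp add: algebra_simps power2_eq_square)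
  moreover have "m^2 + n^2 > 0" using assms by (simp add: sum_power2_gt_zero_iff)
  ultimately show ?thesis using zero_le_power2[of "m - n"] by (smt (verit))
qed

lemma lattice_min_Gamma_theta_le:
  fixes m n :: int
  assumes "m \<noteq> 0 \<or> n \<noteq> 0"
  shows "lattice_min (Gamma_theta m n) \<le> of_int (m^2 - m*n + n^2)"
proof -
  define v :: "real^2" where
    "v = vector [(of_int m + of_int n) / 2, (of_int m - of_int n) * sqrt 3 / 2]"
  have v1: "v$1 = (of_int m + of_int n) / 2" and v2: "v$2 = (of_int m - of_int n) * sqrt 3 / 2"
    by (simp_all add: v_def)
  have norm_v: "norm v ^ 2 = of_int (m^2 - m*n + n^2)"
    unfolding norm_sq_real2 v1 v2 by (simp add: power2_eq_square field_simps sqrt3_mult_self_left)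
  then have "norm v ^ 2 > 0" using hex_norm_form_pos[OF assms] by (simp only: of_int_pos)
  then have "v \<noteq> 0" by auto
  moreover have "v \<in> Gamma_theta m n"
    unfolding Gamma_theta_def v_def by (rule lattice_span_left)
  ultimately show ?thesis
    using lattice_min_le_norm_sq norm_v by metis
qed

lemma C_h_cos_int_ratio:
  assumes "W \<in> C_h \<theta>"
  obtains Q p :: int where "lattice_min W = of_int Q" "Q > 0" "2 * of_int Q * cos \<theta> = of_int p"
proof -
  have sub: "W \<subseteq> Lambda_h" and "well_rounded W" "wr_angle W = \<theta>"
    using assms unfolding C_h_def by blast+
  then obtain a b where ab: "wr_basis W a b" "vec_angle a b = \<theta>"
    using wr_angle_attained by metis
  have "a \<in> W" "b \<in> W"
    using ab(1) lattice_span_left lattice_span_right unfolding wr_basis_def is_basis2_def by blast+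
  with sub have "a \<in> Lambda_h" "b \<in> Lambda_h" by blast+
  moreover have "norm a ^ 2 = lattice_min W" using ab(1) by (simp add: wr_basis_def)
  ultimately have "lattice_min W \<in> \<int>" "2 * inner a b \<in> \<int>"
    using Lambda_h_norm_sq_Ints Lambda_h_double_inner_Ints by metis+
  then obtain Q p :: int where Q: "lattice_min W = of_int Q" and p: "2 * inner a b = of_int p"
    by (blast elim: Ints_cases)
  have "Q > 0" using wr_basis_lattice_min_pos[OF ab(1)] Q by simp
  moreover have "2 * of_int Q * cos \<theta> = of_int p"
    using wr_basis_cos_vec_angle[OF ab(1)] ab(2) Q p \<open>Q > 0\<close> by simp
  ultimately show ?thesis using Q that by blast
qed

theorem lemma4p8:
  fixes m n :: int and \<theta> :: real
  assumes "m > 0" and "n > 0" and "coprime m n"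
    and "1 \<le> real_of_int m / real_of_int n" and "real_of_int m / real_of_int n \<le> 2"
    and "\<not> (3 dvd (m + n))"
    and "pi / 3 \<le> \<theta>" and "\<theta> \<le> pi / 2"
    and "cos \<theta> = real_of_int \<bar>n^2 + 2*m*n - 2*m^2\<bar> / (2 * real_of_int (m^2 - m*n + n^2))"
  shows "\<forall>\<Omega> \<in> C_h \<theta>. lattice_min (Gamma_theta m n) \<le> lattice_min \<Omega>"
proof
  fix W assume "W \<in> C_h \<theta>"
  then obtain Q p :: int where Q: "lattice_min W = of_int Q" "Q > 0"
    and p: "2 * of_int Q * cos \<theta> = of_int p"
    by (rule C_h_cos_int_ratio)
  define D where "D = n^2 + 2*m*n - 2*m^2"
  define N where "N = m^2 - m*n + n^2"
  have "N > 0" unfolding N_def using assms(1) by (simp add: hex_norm_form_pos)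
  have "cos \<theta> = of_int \<bar>D\<bar> / (2 * of_int N)"
    unfolding D_def N_def by (rule assms(9))
  with p \<open>N > 0\<close> have "real_of_int (p * N) = of_int (\<bar>D\<bar> * Q)"
    by (simp add: field_simps)
  then have "p * N = \<bar>D\<bar> * Q" by (simp only: of_int_eq_iff)
  moreover have "coprime N \<bar>D\<bar>"
    using coprime_cos_numerator_denominator[OF assms(3,6)] by (simp add: D_def N_def coprime_commute)
  ultimately have "N dvd Q" by (metis coprime_dvd_mult_right_iff dvd_triv_right)
  then have "N \<le> Q" using \<open>Q > 0\<close> by (rule zdvd_imp_le)
  moreover have "lattice_min (Gamma_theta m n) \<le> of_int N"
    unfolding N_def using assms(1) by (intro lattice_min_Gamma_theta_le) simp
  ultimately show "lattice_min (Gamma_theta m n) \<le> lattice_min W"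
    using Q(1) by linarith
qed

end
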